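(* Under the standing setting and the absorbing-state assumptions (i)–(iv) in the context, there exists $K>0$ such that for all $\mathbf{x}\in\mathbb{R}^N$, $\mathbf{v}\in\chi$, $\lambda>0$, $t\ge0$ and every sequence $l=(\mathbf{x}^{(k)})_{k\ge1}$ with all $\mathbf{x}^{(k)}$ in the closed $\|\cdot\|_1$-ball $\bar B\big(\mathbf{x},\frac{1-z_0}{2K_0\tilde n}\big)$, $$\|\tilde\mu_t^{\lambda,\mathbf{x},\mathbf{v}}-\mu_t^{\lambda,\mathbf{x},\mathbf{v},l}\|_{TV}\le K\sup_{i\ge1}\|\mathbf{x}-\mathbf{x}^{(i)}\|_1.$$
   Context: Let $N\ge1$, $\chi$ a finite set, and $\{\mathcal{P}_{\mathbf{x}}\}_{\mathbf{x}\in\mathbb{R}^N}$ a family of transition matrices on $\chi$. For $\mathbf{x}\in\mathbb{R}^N$, $\mathbf{v}\in\chi$, $\lambda>0$, the frozen process $\tilde V_t^{\lambda,\mathbf{x},\mathbf{v}}$ is the càdlàg continuous-time Markov chain on $\chi$ started at $\mathbf{v}$ which jumps according to the fixed matrix $\mathcal{P}_{\mathbf{x}}$ at each ring of a Poisson clock of rate $\lambda$; its law is $\tilde\mu_t^{\lambda,\mathbf{x},\mathbf{v}}$. For a sequence $l=(\mathbf{x}^{(k)})_{k\ge1}\subset\mathbb{R}^N$, $V_t^{\lambda,\mathbf{x},\mathbf{v},l}$ is the process on $\chi$ started at $\mathbf{v}$ which, at the $k$-th ring of a Poisson clock of rate $\lambda$, jumps according to $\mathcal{P}_{\mathbf{x}^{(k)}}$;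 its law is $\mu_t^{\lambda,\mathbf{x},\mathbf{v},l}$. $\tilde V_k^{\mathbf{x},\mathbf{v}}$ is the discrete-time chain with transition matrix $\mathcal{P}_{\mathbf{x}}$ started at $\mathbf{v}$. Absorbing-state assumptions: there are distinct states $\mathbf{e}^{(1)},\dots,\mathbf{e}^{(L)}\in\chi$ such that (i) each $\mathcal{P}_{\mathbf{x}}$ is stochastic; (ii) $\mathcal{P}_{\mathbf{x}}(\mathbf{e}^{(i)},\mathbf{e}^{(i)})=1$ for all $i,\mathbf{x}$; (iii) there exist $\tilde n\ge1$ and $z_0<1$ with $\mathbb{P}[\tilde V_{\tilde n}^{\mathbf{x},\mathbf{v}}\notin\{\mathbf{e}^{(1)},\dots,\mathbf{e}^{(L)}\}]\le z_0$ for all $\mathbf{x},\mathbf{v}$; (iv) there is $K_0>0$ with $\sum_{\mathbf{v}'}|\mathcal{P}_{\mathbf{x}}(\mathbf{v},\mathbf{v}')-\mathcal{P}_{\mathbf{x}'}(\mathbf{v},\mathbf{v}')|\le K_0\|\mathbf{x}-\mathbf{x}'\|_1$ for all $\mathbf{v},\mathbf{x},\mathbf{x}'$, where $\|\mathbf{w}\|_1=\sum_i|w_i|$. $\|\mu\|_{TV}:=\sum_{\mathbf{v}'\in\chi}|\mu(\mathbf{v}')|$. *)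

theory Defs
  imports "HOL-Analysis.Analysis"
begin

text \<open>Transition-matrix families: P x u w is the probability of jumping from u to w
  under the matrix indexed by x. The state space chi is a finite type 'v,
  points of R^N are vectors real^'n.\<close>

definition norm1 :: "real^'n \<Rightarrow> real" where
  "norm1 x = (\<Sum>i\<in>UNIV. \<bar>x $ i\<bar>)"

definition tv_norm :: "('v::finite \<Rightarrow> real) \<Rightarrow> real" where
  "tv_norm \<mu> = (\<Sum>w\<in>UNIV. \<bar>\<mu> w\<bar>)"

definition dirac_dist :: "'v \<Rightarrow> 'v \<Rightarrow> real" where
  "dirac_dist v = (\<lambda>w. if w = v then 1 else 0)"

definition step_dist :: "('x \<Rightarrow> 'v::finite \<Rightarrow> 'v \<Rightarrow> real) \<Rightarrow> 'x \<Rightarrow> ('v \<Rightarrow> real) \<Rightarrow> 'v \<Rightarrow> real" where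
  "step_dist P x \<mu> = (\<lambda>w. \<Sum>u\<in>UNIV. \<mu> u * P x u w)"

definition frozen_dist :: "('x \<Rightarrow> 'v::finite \<Rightarrow> 'v \<Rightarrow> real) \<Rightarrow> 'x \<Rightarrow> 'v \<Rightarrow> nat \<Rightarrow> 'v \<Rightarrow> real" where
  "frozen_dist P x v n = (step_dist P x ^^ n) (dirac_dist v)"

fun seq_dist :: "('x \<Rightarrow> 'v::finite \<Rightarrow> 'v \<Rightarrow> real) \<Rightarrow> (nat \<Rightarrow> 'x) \<Rightarrow> 'v \<Rightarrow> nat \<Rightarrow> 'v \<Rightarrow> real" where
  "seq_dist P l v 0 = dirac_dist v"
| "seq_dist P l v (Suc n) = step_dist P (l (Suc n)) (seq_dist P l v n)"

definition poisson_weight :: "real \<Rightarrow> real \<Rightarrow> nat \<Rightarrow> real" where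
  "poisson_weight lam t n = exp (- lam * t) * (lam * t) ^ n / fact n"

text \<open>Law at time t of the processes driven by a rate-lam Poisson clock:
  the number of rings up to time t is Poisson(lam t), independent of the jumps.\<close>
definition mu_frozen :: "('x \<Rightarrow> 'v::finite \<Rightarrow> 'v \<Rightarrow> real) \<Rightarrow> real \<Rightarrow> 'x \<Rightarrow> 'v \<Rightarrow> real \<Rightarrow> 'v \<Rightarrow> real" where
  "mu_frozen P lam x v t = (\<lambda>w. \<Sum>n. poisson_weight lam t n * frozen_dist P x v n w)"

definition mu_seq :: "('x \<Rightarrow> 'v::finite \<Rightarrow> 'v \<Rightarrow> real) \<Rightarrow> real \<Rightarrow> 'v \<Rightarrow> (nat \<Rightarrow> 'x) \<Rightarrow> real \<Rightarrow> 'v \<Rightarrow> real" where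
  "mu_seq P lam v l t = (\<lambda>w. \<Sum>n. poisson_weight lam t n * seq_dist P l v n w)"

end

theory Submission
  imports Defs
begin

text \<open>The matrices agree on the absorbing rows for every parameter, so replacing P x by
  P x' in one step creates a total-variation error of at most K0 \<parallel>x - x'\<parallel>_1 times the mass the
  current law puts off the absorbing states. For the frozen chain this mass is at most
  z0^(k div ntil) after k steps, so by telescoping the discrete-time laws after n jumps differ
  by at most K0 ntil / (1 - z0) times sup_i \<parallel>x - x^(i)\<parallel>_1, uniformly in n. The
  continuous-time laws are mixtures of the discrete-time ones with the same Poisson weights,
  which preserves the bound.\<close>

lemma poisson_weight_nonneg: "lam \<ge> 0 \<Longrightarrow> t \<ge> 0 \<Longrightarrow> poisson_weight lam t n \<ge> 0"
  unfolding poisson_weight_def by simp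

lemma sums_poisson_weight: "poisson_weight lam t sums 1"
proof -
  have "(\<lambda>n. exp (- lam * t) * ((lam * t) ^ n /\<^sub>R fact n)) sums (exp (- lam * t) * exp (lam * t))"
    by (rule sums_mult[OF exp_converges])
  moreover have "exp (- lam * t) * exp (lam * t) = 1"
    by (simp add: exp_minus field_simps)
  moreover have "(\<lambda>n. exp (- lam * t) * ((lam * t) ^ n /\<^sub>R fact n)) = poisson_weight lam t"
    unfolding poisson_weight_def by (auto simp: divide_inverse scaleR_conv_of_real)
  ultimately show ?thesis by simp
qed

lemma summable_poisson_weight_mult:
  assumes "lam \<ge> 0" "t \<ge> 0" "\<And>n. \<bar>f n\<bar> \<le> B"
  shows "summable (\<lambda>n. poisson_weight lam t n * f n)"
proof (rule summable_comparison_test)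
  show "\<exists>N. \<forall>n\<ge>N. norm (poisson_weight lam t n * f n) \<le> B * poisson_weight lam t n"
    using assms poisson_weight_nonneg[OF assms(1,2)]
    by (auto simp: abs_mult mult.commute intro: mult_right_mono)
  show "summable (\<lambda>n. B * poisson_weight lam t n)"
    using sums_poisson_weight by (intro summable_mult) (auto simp: sums_iff)
qed

lemma abs_poisson_mixture_diff_le:
  assumes lt: "lam \<ge> 0" "t \<ge> 0" and bounded: "\<And>n. \<bar>a n\<bar> \<le> 1" "\<And>n. \<bar>b n\<bar> \<le> 1"
  shows "\<bar>(\<Sum>n. poisson_weight lam t n * a n) - (\<Sum>n. poisson_weight lam t n * b n)\<bar>
           \<le> (\<Sum>n. poisson_weight lam t n * \<bar>a n - b n\<bar>)"
proof -
  let ?p = "poisson_weight lam t"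
  have abs_eq: "(\<lambda>n. \<bar>?p n * (a n - b n)\<bar>) = (\<lambda>n. ?p n * \<bar>a n - b n\<bar>)"
    using poisson_weight_nonneg[OF lt] by (simp add: abs_mult)
  have "\<bar>\<bar>a n - b n\<bar>\<bar> \<le> 2" for n
    using bounded[of n] by auto
  hence "summable (\<lambda>n. ?p n * \<bar>a n - b n\<bar>)"
    by (rule summable_poisson_weight_mult[OF lt])
  hence "\<bar>\<Sum>n. ?p n * (a n - b n)\<bar> \<le> (\<Sum>n. ?p n * \<bar>a n - b n\<bar>)"
    using summable_rabs[of "\<lambda>n. ?p n * (a n - b n)"] abs_eq by simp
  moreover have "(\<Sum>n. ?p n * a n) - (\<Sum>n. ?p n * b n) = (\<Sum>n. ?p n * (a n - b n))"
    using suminf_diff[OF summable_poisson_weight_mult[OF lt bounded(1)]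
                         summable_poisson_weight_mult[OF lt bounded(2)]]
    by (simp add: right_diff_distrib)
  ultimately show ?thesis by simp
qed

lemma tv_norm_poisson_mixture_diff_le:
  fixes a b :: "nat \<Rightarrow> 'v::finite \<Rightarrow> real"
  assumes lt: "lam \<ge> 0" "t \<ge> 0"
    and bounded: "\<And>n w. \<bar>a n w\<bar> \<le> 1" "\<And>n w. \<bar>b n w\<bar> \<le> 1"
    and tv_le: "\<And>n. tv_norm (\<lambda>w. a n w - b n w) \<le> B"
  shows "tv_norm (\<lambda>w. (\<Sum>n. poisson_weight lam t n * a n w) - (\<Sum>n. poisson_weight lam t n * b n w)) \<le> B"
proof -
  let ?p = "poisson_weight lam t"
  have "\<bar>\<bar>a n w - b n w\<bar>\<bar> \<le> 2" for n w
    using bounded[of n w] by auto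
  hence summable_diff: "summable (\<lambda>n. ?p n * \<bar>a n w - b n w\<bar>)" for w
    by (rule summable_poisson_weight_mult[OF lt])
  have "tv_norm (\<lambda>w. (\<Sum>n. ?p n * a n w) - (\<Sum>n. ?p n * b n w))
          \<le> (\<Sum>w\<in>UNIV. \<Sum>n. ?p n * \<bar>a n w - b n w\<bar>)"
    unfolding tv_norm_def using bounded by (intro sum_mono abs_poisson_mixture_diff_le[OF lt])
  also have "\<dots> = (\<Sum>n. ?p n * tv_norm (\<lambda>w. a n w - b n w))"
    by (simp add: suminf_sum[OF summable_diff, symmetric] tv_norm_def sum_distrib_left)
  also have "\<dots> \<le> (\<Sum>n. ?p n * B)"
  proof (rule suminf_le)
    show "?p n * tv_norm (\<lambda>w. a n w - b n w) \<le> ?p n * B" for n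
      using poisson_weight_nonneg[OF lt] tv_le by (intro mult_left_mono)
    show "summable (\<lambda>n. ?p n * B)"
      using sums_mult2[OF sums_poisson_weight] by (auto simp: sums_iff)
    show "summable (\<lambda>n. ?p n * tv_norm (\<lambda>w. a n w - b n w))"
      using summable_sum[of UNIV "\<lambda>w n. ?p n * \<bar>a n w - b n w\<bar>"] summable_diff
      by (simp add: tv_norm_def sum_distrib_left)
  qed
  also have "\<dots> = B"
    using sums_mult2[OF sums_poisson_weight[of lam t], of B] by (simp add: sums_iff)
  finally show ?thesis .
qed

lemma sum_power_div_le:
  fixes z :: real
  assumes "m \<ge> 1" "0 \<le> z" "z < 1"
  shows "(\<Sum>k<n. z ^ (k div m)) \<le> real m / (1 - z)"
proof -
  define q where "q = n div m + 1"
  have "q * m = n div m * m + m"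
    by (simp add: q_def)
  hence "n \<le> q * m"
    using assms(1) mod_less_divisor[of m n] div_mult_mod_eq[of n m] by linarith
  hence "(\<Sum>k<n. z ^ (k div m)) \<le> (\<Sum>k<q * m. z ^ (k div m))"
    using assms by (intro sum_mono2) auto
  also have "\<dots> = (\<Sum>j<q. \<Sum>k\<in>{j * m..<j * m + m}. z ^ (k div m))"
    by (rule sum.nat_group[symmetric])
  also have "\<dots> = (\<Sum>j<q. real m * z ^ j)"
  proof (rule sum.cong[OF refl])
    fix j
    have "k div m = j" if "k \<in> {j * m..<j * m + m}" for k
      using assms(1) that by (auto intro!: div_nat_eqI simp: mult.commute)
    thus "(\<Sum>k\<in>{j * m..<j * m + m}. z ^ (k div m)) = real m * z ^ j"
      by simp
  qed
  also have "\<dots> = real m * ((1 - z ^ q) / (1 - z))"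
    using assms by (simp add: sum_distrib_left[symmetric] sum_gp_strict)
  also have "\<dots> \<le> real m / (1 - z)"
    using assms by (simp add: divide_right_mono)
  finally show ?thesis .
qed

lemma tv_norm_add_le: "tv_norm (\<lambda>w. f w + g w) \<le> tv_norm f + tv_norm (g :: 'v::finite \<Rightarrow> real)"
  unfolding tv_norm_def by (simp add: sum.distrib[symmetric] sum_mono abs_triangle_ineq)

lemma distribution_abs_le_1:
  fixes \<nu> :: "'v::finite \<Rightarrow> real"
  assumes "\<And>u. \<nu> u \<ge> 0" "(\<Sum>u\<in>UNIV. \<nu> u) = 1"
  shows "\<bar>\<nu> w\<bar> \<le> 1"
  using member_le_sum[of w UNIV \<nu>] assms by simp

lemma dirac_dist_nonneg: "dirac_dist a w \<ge> 0"
  by (simp add: dirac_dist_def)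

lemma sum_dirac_dist: "(\<Sum>w\<in>UNIV. dirac_dist (a :: 'v::finite) w) = 1"
  by (simp add: dirac_dist_def)

locale stochastic_absorbing =
  fixes P :: "'x \<Rightarrow> 'v::finite \<Rightarrow> 'v \<Rightarrow> real" and A :: "'v set"
  assumes nonneg: "\<And>x u w. P x u w \<ge> 0"
    and row_sum: "\<And>x u. (\<Sum>w\<in>UNIV. P x u w) = 1"
    and absorbing: "\<And>a x. a \<in> A \<Longrightarrow> P x a a = 1"
begin

lemma absorbing_row: "a \<in> A \<Longrightarrow> P x a = dirac_dist a"
proof
  fix w
  assume a: "a \<in> A"
  have "(\<Sum>w\<in>UNIV - {a}. P x a w) = 0"
    using row_sum[of x a] absorbing[OF a] by (simp add: sum.remove[of UNIV a])
  hence "P x a w = 0" if "w \<noteq> a"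
    using that by (simp add: sum_nonneg_eq_0_iff nonneg)
  thus "P x a w = dirac_dist a w"
    using absorbing[OF a] by (auto simp: dirac_dist_def)
qed

lemma step_dist_dirac_absorbing: "a \<in> A \<Longrightarrow> step_dist P x (dirac_dist a) = dirac_dist a"
  unfolding step_dist_def by (simp add: dirac_dist_def if_distrib[of "\<lambda>c. c * _"] absorbing_row cong: if_cong)

lemma frozen_dist_absorbing: "a \<in> A \<Longrightarrow> frozen_dist P x a m = dirac_dist a"
  by (induct m) (simp_all add: frozen_dist_def step_dist_dirac_absorbing)

lemma step_dist_nonneg: "(\<And>u. \<nu> u \<ge> 0) \<Longrightarrow> step_dist P x \<nu> w \<ge> 0"
  unfolding step_dist_def by (intro sum_nonneg mult_nonneg_nonneg nonneg)

lemma sum_step_dist: "(\<Sum>w\<in>UNIV. step_dist P x \<nu> w) = (\<Sum>w\<in>UNIV. \<nu> w)"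
  unfolding step_dist_def by (subst sum.swap) (simp add: sum_distrib_left[symmetric] row_sum)

lemma funpow_step_dist_nonneg: "(\<And>u. \<nu> u \<ge> 0) \<Longrightarrow> (step_dist P x ^^ m) \<nu> w \<ge> 0"
  by (induct m arbitrary: w) (auto intro!: step_dist_nonneg)

lemma sum_funpow_step_dist: "(\<Sum>w\<in>UNIV. (step_dist P x ^^ m) \<nu> w) = (\<Sum>w\<in>UNIV. \<nu> w)"
  by (induct m) (auto simp: sum_step_dist)

lemma frozen_dist_nonneg: "frozen_dist P x v m w \<ge> 0"
  unfolding frozen_dist_def by (intro funpow_step_dist_nonneg dirac_dist_nonneg)

lemma sum_frozen_dist: "(\<Sum>w\<in>UNIV. frozen_dist P x v m w) = 1"
  unfolding frozen_dist_def by (simp add: sum_funpow_step_dist sum_dirac_dist)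

lemma seq_dist_nonneg: "seq_dist P l v m w \<ge> 0"
  by (induct m arbitrary: w) (auto intro!: step_dist_nonneg simp: dirac_dist_nonneg)

lemma sum_seq_dist: "(\<Sum>w\<in>UNIV. seq_dist P l v m w) = 1"
  by (induct m) (auto simp: sum_step_dist sum_dirac_dist)

lemma tv_norm_step_dist_le: "tv_norm (step_dist P x \<mu>) \<le> tv_norm \<mu>"
proof -
  have "tv_norm (step_dist P x \<mu>) \<le> (\<Sum>w\<in>UNIV. \<Sum>u\<in>UNIV. \<bar>\<mu> u\<bar> * P x u w)"
    unfolding tv_norm_def step_dist_def
    by (intro sum_mono order.trans[OF sum_abs]) (simp add: abs_mult nonneg)
  also have "\<dots> = tv_norm \<mu>"
    by (subst sum.swap) (simp add: sum_distrib_left[symmetric] row_sum tv_norm_def)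
  finally show ?thesis .
qed

lemma tv_norm_step_dist_diff_le:
  assumes "\<And>u. (\<Sum>w\<in>UNIV. \<bar>P x u w - P y u w\<bar>) \<le> c"
  shows "tv_norm (\<lambda>w. step_dist P x \<nu> w - step_dist P y \<nu> w) \<le> c * (\<Sum>u\<in>UNIV - A. \<bar>\<nu> u\<bar>)"
proof -
  have "tv_norm (\<lambda>w. step_dist P x \<nu> w - step_dist P y \<nu> w)
          \<le> (\<Sum>w\<in>UNIV. \<Sum>u\<in>UNIV. \<bar>\<nu> u\<bar> * \<bar>P x u w - P y u w\<bar>)"
    unfolding tv_norm_def step_dist_def sum_subtractf[symmetric]
    by (intro sum_mono order.trans[OF sum_abs]) (simp add: abs_mult right_diff_distrib[symmetric])
  also have "\<dots> = (\<Sum>u\<in>UNIV. \<bar>\<nu> u\<bar> * (\<Sum>w\<in>UNIV. \<bar>P x u w - P y u w\<bar>))"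
    by (subst sum.swap) (simp add: sum_distrib_left)
  also have "\<dots> = (\<Sum>u\<in>UNIV - A. \<bar>\<nu> u\<bar> * (\<Sum>w\<in>UNIV. \<bar>P x u w - P y u w\<bar>))"
    by (rule sum.mono_neutral_right) (auto simp: absorbing_row)
  also have "\<dots> \<le> (\<Sum>u\<in>UNIV - A. \<bar>\<nu> u\<bar> * c)"
    by (intro sum_mono mult_left_mono assms) auto
  finally show ?thesis
    by (simp add: sum_distrib_left mult.commute)
qed

lemma funpow_step_dist_eq: "(step_dist P x ^^ m) \<nu> = (\<lambda>w. \<Sum>u\<in>UNIV. \<nu> u * frozen_dist P x u m w)"
proof (induct m)
  case 0
  show ?case
    unfolding frozen_dist_def dirac_dist_def by (auto simp: if_distrib cong: if_cong)
next
  case (Suc m)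
  show ?case
  proof
    fix w
    have "(step_dist P x ^^ Suc m) \<nu> w
            = (\<Sum>u'\<in>UNIV. (\<Sum>u\<in>UNIV. \<nu> u * frozen_dist P x u m u') * P x u' w)"
      by (simp add: Suc step_dist_def)
    also have "\<dots> = (\<Sum>u\<in>UNIV. \<nu> u * (\<Sum>u'\<in>UNIV. frozen_dist P x u m u' * P x u' w))"
      by (simp add: sum_distrib_right sum_distrib_left mult.assoc) (rule sum.swap)
    finally show "(step_dist P x ^^ Suc m) \<nu> w = (\<Sum>u\<in>UNIV. \<nu> u * frozen_dist P x u (Suc m) w)"
      by (simp add: frozen_dist_def step_dist_def)
  qed
qed

end

locale uniformly_absorbing = stochastic_absorbing P A
  for P :: "'x \<Rightarrow> 'v::finite \<Rightarrow> 'v \<Rightarrow> real" and A +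
  fixes n0 :: nat and z0 :: real
  assumes n0_pos: "n0 \<ge> 1" and z0_lt_1: "z0 < 1"
    and escape: "\<And>x v. (\<Sum>w\<in>UNIV - A. frozen_dist P x v n0 w) \<le> z0"
begin

lemma z0_nonneg: "z0 \<ge> 0"
proof -
  have "0 \<le> (\<Sum>w\<in>UNIV - A. frozen_dist P undefined undefined n0 w)"
    by (intro sum_nonneg frozen_dist_nonneg)
  thus ?thesis
    using escape by (meson order.trans)
qed

lemma escape_funpow_step_dist:
  assumes "\<And>u. \<nu> u \<ge> 0"
  shows "(\<Sum>w\<in>UNIV - A. (step_dist P x ^^ n0) \<nu> w) \<le> z0 * (\<Sum>u\<in>UNIV - A. \<nu> u)"
proof -
  have "(\<Sum>w\<in>UNIV - A. (step_dist P x ^^ n0) \<nu> w)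
          = (\<Sum>u\<in>UNIV. \<nu> u * (\<Sum>w\<in>UNIV - A. frozen_dist P x u n0 w))"
    by (simp add: funpow_step_dist_eq sum_distrib_left) (rule sum.swap)
  also have "\<dots> = (\<Sum>u\<in>UNIV - A. \<nu> u * (\<Sum>w\<in>UNIV - A. frozen_dist P x u n0 w))"
    by (rule sum.mono_neutral_right) (auto simp: frozen_dist_absorbing dirac_dist_def)
  also have "\<dots> \<le> (\<Sum>u\<in>UNIV - A. \<nu> u * z0)"
    by (intro sum_mono mult_left_mono escape assms)
  finally show ?thesis
    by (simp add: sum_distrib_left mult.commute)
qed

lemma escape_funpow_step_dist_mult:
  assumes "\<And>u. \<nu> u \<ge> 0"
  shows "(\<Sum>w\<in>UNIV - A. (step_dist P x ^^ (q * n0)) \<nu> w) \<le> z0 ^ q * (\<Sum>u\<in>UNIV - A. \<nu> u)"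
proof (induct q)
  case 0
  show ?case by simp
next
  case (Suc q)
  have "(\<Sum>w\<in>UNIV - A. (step_dist P x ^^ (Suc q * n0)) \<nu> w)
          \<le> z0 * (\<Sum>u\<in>UNIV - A. (step_dist P x ^^ (q * n0)) \<nu> u)"
    using escape_funpow_step_dist[OF funpow_step_dist_nonneg[OF assms]]
    by (simp add: funpow_add add.commute)
  also have "\<dots> \<le> z0 ^ Suc q * (\<Sum>u\<in>UNIV - A. \<nu> u)"
    using Suc z0_nonneg by (simp add: mult.assoc mult_left_mono)
  finally show ?case .
qed

lemma escape_frozen_dist: "(\<Sum>w\<in>UNIV - A. frozen_dist P x v n w) \<le> z0 ^ (n div n0)"
proof -
  let ?\<nu> = "(step_dist P x ^^ (n mod n0)) (dirac_dist v)"
  have "frozen_dist P x v n = (step_dist P x ^^ (n div n0 * n0)) ?\<nu>"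
    unfolding frozen_dist_def by (metis funpow_add comp_apply div_mult_mod_eq)
  hence "(\<Sum>w\<in>UNIV - A. frozen_dist P x v n w) \<le> z0 ^ (n div n0) * (\<Sum>u\<in>UNIV - A. ?\<nu> u)"
    using escape_funpow_step_dist_mult[OF funpow_step_dist_nonneg[OF dirac_dist_nonneg]] by simp
  also have "\<dots> \<le> z0 ^ (n div n0) * (\<Sum>u\<in>UNIV. ?\<nu> u)"
    using z0_nonneg by (intro mult_left_mono sum_mono2 funpow_step_dist_nonneg dirac_dist_nonneg) auto
  finally show ?thesis
    by (simp add: sum_funpow_step_dist sum_dirac_dist)
qed

lemma tv_norm_frozen_seq_diff_le:
  assumes lip: "\<And>k u. k \<ge> 1 \<Longrightarrow> (\<Sum>w\<in>UNIV. \<bar>P x u w - P (l k) u w\<bar>) \<le> c" and "c \<ge> 0"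
  shows "tv_norm (\<lambda>w. frozen_dist P x v n w - seq_dist P l v n w) \<le> c * (\<Sum>k<n. z0 ^ (k div n0))"
proof (induct n)
  case 0
  show ?case by (simp add: tv_norm_def frozen_dist_def)
next
  case (Suc n)
  let ?f = "frozen_dist P x v n" and ?s = "seq_dist P l v n" and ?y = "l (Suc n)"
  have "(\<lambda>w. frozen_dist P x v (Suc n) w - seq_dist P l v (Suc n) w)
          = (\<lambda>w. (step_dist P x ?f w - step_dist P ?y ?f w) + step_dist P ?y (\<lambda>u. ?f u - ?s u) w)"
    by (simp add: frozen_dist_def step_dist_def sum_subtractf left_diff_distrib)
  hence "tv_norm (\<lambda>w. frozen_dist P x v (Suc n) w - seq_dist P l v (Suc n) w)
          \<le> tv_norm (\<lambda>w. step_dist P x ?f w - step_dist P ?y ?f w)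
            + tv_norm (step_dist P ?y (\<lambda>u. ?f u - ?s u))"
    by (simp add: tv_norm_add_le)
  also have "\<dots> \<le> c * (\<Sum>u\<in>UNIV - A. \<bar>?f u\<bar>) + tv_norm (\<lambda>u. ?f u - ?s u)"
    by (intro add_mono tv_norm_step_dist_diff_le lip tv_norm_step_dist_le) simp
  also have "\<dots> \<le> c * z0 ^ (n div n0) + c * (\<Sum>k<n. z0 ^ (k div n0))"
    using escape_frozen_dist[of x v n] Suc \<open>c \<ge> 0\<close> frozen_dist_nonneg
    by (intro add_mono mult_left_mono) auto
  finally show ?case
    by (simp add: distrib_left add.commute)
qed

lemma tv_norm_mu_frozen_seq_diff_le:
  assumes "\<And>k u. k \<ge> 1 \<Longrightarrow> (\<Sum>w\<in>UNIV. \<bar>P x u w - P (l k) u w\<bar>) \<le> c" "c \<ge> 0"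
    and "lam \<ge> 0" "t \<ge> 0"
  shows "tv_norm (\<lambda>w. mu_frozen P lam x v t w - mu_seq P lam v l t w) \<le> c * (real n0 / (1 - z0))"
  unfolding mu_frozen_def mu_seq_def
proof (rule tv_norm_poisson_mixture_diff_le)
  show "\<bar>frozen_dist P x v n w\<bar> \<le> 1" "\<bar>seq_dist P l v n w\<bar> \<le> 1" for n w
    by (intro distribution_abs_le_1 frozen_dist_nonneg sum_frozen_dist seq_dist_nonneg sum_seq_dist)+
  show "tv_norm (\<lambda>w. frozen_dist P x v n w - seq_dist P l v n w) \<le> c * (real n0 / (1 - z0))" for n
    using tv_norm_frozen_seq_diff_le[OF assms(1,2)] assms(2)
          sum_power_div_le[OF n0_pos z0_nonneg z0_lt_1, of n]
    by (meson mult_left_mono order.trans)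
qed (use assms in auto)

end

lemma norm1_nonneg: "norm1 x \<ge> 0"
  unfolding norm1_def by (simp add: sum_nonneg)

theorem mainTheorem4:
  fixes P :: "real^'n \<Rightarrow> 'v::finite \<Rightarrow> 'v \<Rightarrow> real"
    and e :: "nat \<Rightarrow> 'v" and L :: nat
    and ntil :: nat and z0 :: real and K0 :: real
  assumes distinct_e: "inj_on e {1..L}"
    and stoch_nonneg: "\<And>x u w. P x u w \<ge> 0"
    and stoch_sum: "\<And>x u. (\<Sum>w\<in>UNIV. P x u w) = 1"
    and absorbing: "\<And>i x. i \<in> {1..L} \<Longrightarrow> P x (e i) (e i) = 1"
    and ntil_pos: "ntil \<ge> 1" and z0_lt: "z0 < 1"
    and escape: "\<And>x v. (\<Sum>w\<in>UNIV - e ` {1..L}. frozen_dist P x v ntil w) \<le> z0"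
    and K0_pos: "K0 > 0"
    and lipschitz: "\<And>v x x'. (\<Sum>w\<in>UNIV. \<bar>P x v w - P x' v w\<bar>) \<le> K0 * norm1 (x - x')"
  shows "\<exists>K>0. \<forall>x v lam t (l :: nat \<Rightarrow> real^'n).
           lam > 0 \<longrightarrow> t \<ge> 0 \<longrightarrow>
           (\<forall>k\<ge>1. norm1 (x - l k) \<le> (1 - z0) / (2 * K0 * real ntil)) \<longrightarrow>
           tv_norm (\<lambda>w. mu_frozen P lam x v t w - mu_seq P lam v l t w)
             \<le> K * (SUP i\<in>{1..}. norm1 (x - l i))"
proof -
  \<comment> \<open>Only the set of absorbing states matters.\<close>
  interpret uniformly_absorbing P "e ` {1..L}" ntil z0
    using stoch_nonneg stoch_sum absorbing ntil_pos z0_lt escape by unfold_locales auto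
  have "tv_norm (\<lambda>w. mu_frozen P lam x v t w - mu_seq P lam v l t w)
          \<le> K0 * real ntil / (1 - z0) * (SUP i\<in>{1..}. norm1 (x - l i))"
    if "lam > 0" "t \<ge> 0" and ball: "\<forall>k\<ge>1. norm1 (x - l k) \<le> (1 - z0) / (2 * K0 * real ntil)"
    for x v lam t and l :: "nat \<Rightarrow> real^'n"
  proof -
    define \<delta> where "\<delta> = (SUP i\<in>{1..}. norm1 (x - l i))"
    \<comment> \<open>The radius of the ball matters only in that it makes this supremum a genuine one.\<close>
    have "bdd_above ((\<lambda>i. norm1 (x - l i)) ` {1..})"
      using ball by (auto intro: bdd_aboveI2)
    hence dist_le: "norm1 (x - l k) \<le> \<delta>" if "k \<ge> 1" for k
      unfolding \<delta>_def using that by (intro cSUP_upper) auto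
    have "(\<Sum>w\<in>UNIV. \<bar>P x u w - P (l k) u w\<bar>) \<le> K0 * \<delta>" if "k \<ge> 1" for k u
      using lipschitz[of x u "l k"] dist_le[OF that] K0_pos by (smt (verit) mult_left_mono)
    moreover have "K0 * \<delta> \<ge> 0"
      using K0_pos dist_le[of 1] norm1_nonneg[of "x - l 1"] by simp
    ultimately show ?thesis
      using tv_norm_mu_frozen_seq_diff_le[of x l "K0 * \<delta>" lam t v] \<open>lam > 0\<close> \<open>t \<ge> 0\<close>
      by (simp add: \<delta>_def mult_ac)
  qed
  moreover have "K0 * real ntil / (1 - z0) > 0"
    using K0_pos ntil_pos z0_lt by simp
  ultimately show ?thesis by blast
qed

end
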